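(* Consider a game in which Constructor and Blocker alternately claim unclaimed edges of $K_n$, and suppose that at some moment, with Constructor to move, there are five vertices $v_1,\dots,v_5$ that are isolated in Constructor's graph and such that no edge between two of them has been claimed by Blocker. Assume Constructor is allowed to claim edges among $v_1,\dots,v_5$ forming a triangle with a pendant leg (i.e. this subgraph is not forbidden to her). Then, whatever Blocker does, Constructor can within her next four moves build a triangle with a pendant leg on vertices among $v_1,\dots,v_5$.
   Context: A triangle with a pendant leg is a triangle together with one additional edge joining one of its vertices to a fourth vertex. Constructor's graph is the graph of edges claimed by Constructor. *)

theory Defs
  imports Main
begin

definition Kn_edges :: "nat \<Rightarrow> nat set set" where
  "Kn_edges n = {e. e \<subseteq> {..<n} \<and> card e = 2}"

definition contains_copy :: "nat set set \<Rightarrow> 'b set set \<Rightarrow> bool" where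
  "contains_copy G H \<longleftrightarrow> (\<exists>f. inj_on f (\<Union>H) \<and> (\<forall>e\<in>H. f ` e \<in> G))"

definition F_free :: "'b set set \<Rightarrow> nat set set \<Rightarrow> bool" where
  "F_free F G \<longleftrightarrow> \<not> contains_copy G F"

definition paw_edges :: "nat \<Rightarrow> nat \<Rightarrow> nat \<Rightarrow> nat \<Rightarrow> nat set set" where
  "paw_edges a b c d = {{a,b},{b,c},{a,c},{c,d}}"

definition paw_on :: "nat set set \<Rightarrow> nat set \<Rightarrow> bool" where
  "paw_on C S \<longleftrightarrow> (\<exists>a\<in>S. \<exists>b\<in>S. \<exists>c\<in>S. \<exists>d\<in>S.
      distinct [a,b,c,d] \<and> paw_edges a b c d \<subseteq> C)"

text \<open>builds F n S k C B: Constructor (graph C, to move, forbidden graph F) can, against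
  every play of Blocker (graph B), obtain a triangle with a pendant leg on vertices of S
  within her next k moves. Constructor may only claim unclaimed edges keeping her graph
  F-free; Blocker claims any unclaimed edge (if none remains, the game is over).\<close>
fun builds :: "'b set set \<Rightarrow> nat \<Rightarrow> nat set \<Rightarrow> nat \<Rightarrow> nat set set \<Rightarrow> nat set set \<Rightarrow> bool" where
  "builds F n S 0 C B = paw_on C S"
| "builds F n S (Suc k) C B =
     (paw_on C S \<or>
      (\<exists>e. e \<in> Kn_edges n \<and> e \<notin> C \<and> e \<notin> B \<and> F_free F (insert e C) \<and>
        (paw_on (insert e C) S \<or>
         ((\<exists>e'. e' \<in> Kn_edges n - (insert e C \<union> B)) \<and>
          (\<forall>e'. e' \<in> Kn_edges n - (insert e C \<union> B) \<longrightarrow>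
                builds F n S k (insert e C) (insert e' B))))))"

end

theory Submission
  imports Defs
begin

text \<open>Since Constructor's graph avoids the five vertices and Blocker has no edge among them,
  every relabelling of the five vertices fixes the current position, so once one triangle with
  a pendant leg on them is allowed, all of them are. Constructor claims xy and then yz for a
  vertex z such that Blocker's first edge is neither xz nor yz. If Blocker does not take xz,
  Constructor closes the triangle xyz; the four legs from x or z to the two remaining
  vertices cannot all be among Blocker's three edges. If Blocker takes xz, Constructor picks a
  remaining vertex w with xw, yw, zw all free and claims yw; Blocker can take only one of
  xw and zw, and the other closes a triangle at y whose pendant leg is yz or yx.\<close>

lemma contains_copy_image:
  assumes "contains_copy G H" and "inj_on g (\<Union>G)" and "\<And>e. e \<in> G \<Longrightarrow> g ` e \<in> G'"
  shows "contains_copy G' H"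
proof -
  obtain f where f: "inj_on f (\<Union>H)" "\<And>e. e \<in> H \<Longrightarrow> f ` e \<in> G"
    using assms(1) unfolding contains_copy_def by blast
  have "f ` \<Union>H \<subseteq> \<Union>G" using f(2) by blast
  then have "inj_on (g \<circ> f) (\<Union>H)"
    using f(1) assms(2) by (blast intro: comp_inj_on inj_on_subset)
  moreover have "(g \<circ> f) ` e \<in> G'" if "e \<in> H" for e
    using f(2)[OF that] assms(3) by (metis image_comp)
  ultimately show ?thesis unfolding contains_copy_def by blast
qed

lemma F_free_image:
  assumes "F_free F G'" and "inj_on g (\<Union>G)" and "\<And>e. e \<in> G \<Longrightarrow> g ` e \<in> G'"
  shows "F_free F G"
  using assms contains_copy_image unfolding F_free_def by blast

lemma F_free_subset: "F_free F G' \<Longrightarrow> G \<subseteq> G' \<Longrightarrow> F_free F G"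
  using F_free_image[of F G' id G] by auto

lemma F_free_paw_relabel:
  assumes disj: "\<And>e. e \<in> C \<Longrightarrow> e \<inter> S = {}"
    and abcd: "distinct [a, b, c, d]" "{a, b, c, d} \<subseteq> S"
    and abcd': "distinct [a', b', c', d']" "{a', b', c', d'} \<subseteq> S"
    and free: "F_free F (C \<union> paw_edges a' b' c' d')"
  shows "F_free F (C \<union> paw_edges a b c d)"
proof -
  define g where "g x = (if x = a then a' else if x = b then b' else if x = c then c'
    else if x = d then d' else x)" for x
  have g_abcd: "g a = a'" "g b = b'" "g c = c'" "g d = d'"
    using abcd(1) unfolding g_def by auto
  have g_fixes_C: "g x = x" "x \<notin> S" if "x \<in> \<Union>C" for x
    using that disj abcd(2) unfolding g_def by auto
  define V where "V = {a, b, c, d}"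
  have "inj_on g V"
    using abcd'(1) distinct_map[of g "[a, b, c, d]"] by (simp add: V_def g_abcd)
  moreover have "g ` V \<subseteq> S"
    using abcd'(2) by (simp add: V_def g_abcd)
  ultimately have "inj_on g (\<Union>C \<union> V)"
    using g_fixes_C unfolding inj_on_def by (metis Un_iff image_subset_iff)
  moreover have "\<Union>(C \<union> paw_edges a b c d) = \<Union>C \<union> V"
    by (auto simp: paw_edges_def V_def)
  moreover have "g ` e \<in> C \<union> paw_edges a' b' c' d'" if "e \<in> C \<union> paw_edges a b c d" for e
  proof (cases "e \<in> C")
    case True
    then have "g ` e = e" using g_fixes_C by force
    with True show ?thesis by simp
  next
    case False
    have "(\<lambda>e. g ` e) ` paw_edges a b c d = paw_edges a' b' c' d'"
      by (simp add: paw_edges_def g_abcd)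
    with False that show ?thesis by blast
  qed
  ultimately show ?thesis by (intro F_free_image[OF free]) simp_all
qed

lemma card_less_ex_notin: "finite A \<Longrightarrow> card A < card B \<Longrightarrow> \<exists>x\<in>B. x \<notin> A"
  by (metis card_mono not_le subsetI)

lemma builds_Suc_claimI:
  assumes "e \<in> Kn_edges n" "e \<notin> C" "e \<notin> B" "F_free F (insert e C)"
    and "e0 \<in> Kn_edges n - (insert e C \<union> B)"
    and "\<And>e'. e' \<in> Kn_edges n - (insert e C \<union> B) \<Longrightarrow> builds F n S k (insert e C) (insert e' B)"
  shows "builds F n S (Suc k) C B"
  using assms by auto

lemma builds_Suc_completeI:
  assumes "e \<in> Kn_edges n" "e \<notin> C" "e \<notin> B" "F_free F (insert e C)"
    and "paw_on (insert e C) S"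
  shows "builds F n S (Suc k) C B"
  using assms by auto

locale fresh_vertex_set =
  fixes F :: "'b set set" and n :: nat and S :: "nat set" and C0 B0 :: "nat set set"
  assumes edge_in_Kn: "\<And>a b. a \<in> S \<Longrightarrow> b \<in> S \<Longrightarrow> a \<noteq> b \<Longrightarrow> {a, b} \<in> Kn_edges n"
    and edge_notin_C0: "\<And>a b. a \<in> S \<Longrightarrow> b \<in> S \<Longrightarrow> {a, b} \<notin> C0"
    and edge_notin_B0: "\<And>a b. a \<in> S \<Longrightarrow> b \<in> S \<Longrightarrow> {a, b} \<notin> B0"
    and paw_allowed: "\<And>a b c d. a \<in> S \<Longrightarrow> b \<in> S \<Longrightarrow> c \<in> S \<Longrightarrow> d \<in> S \<Longrightarrow>
      distinct [a, b, c, d] \<Longrightarrow> F_free F (C0 \<union> paw_edges a b c d)"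
begin

lemma F_free_below_paw:
  "a \<in> S \<Longrightarrow> b \<in> S \<Longrightarrow> c \<in> S \<Longrightarrow> d \<in> S \<Longrightarrow> distinct [a, b, c, d] \<Longrightarrow>
    G \<subseteq> C0 \<union> paw_edges a b c d \<Longrightarrow> F_free F G"
  using paw_allowed F_free_subset by blast

lemma builds_Suc_complete_pawI:
  assumes "a \<in> S" "b \<in> S" "c \<in> S" "d \<in> S" "distinct [a, b, c, d]"
    and "x \<in> S" "y \<in> S" "x \<noteq> y" "{x, y} \<notin> C" "{x, y} \<notin> B"
    and "C \<subseteq> C0 \<union> paw_edges a b c d" "{x, y} \<in> paw_edges a b c d"
    and "paw_edges a b c d \<subseteq> insert {x, y} C"
  shows "builds F n S (Suc k) C B"
proof (rule builds_Suc_completeI)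
  show "{x, y} \<in> Kn_edges n" using edge_in_Kn assms by auto
  show "F_free F (insert {x, y} C)"
    by (rule F_free_below_paw[OF assms(1-5)]) (use assms(11,12) in blast)
  show "paw_on (insert {x, y} C) S"
    using assms(1-5,13) unfolding paw_on_def by blast
qed (use assms in auto)

lemma builds_closing_triangle:
  assumes S: "x \<in> S" "y \<in> S" "z \<in> S" "w1 \<in> S" "w2 \<in> S"
    and D: "distinct [x, y, z, w1, w2]"
    and xz_free: "{x, z} \<noteq> b1" "{x, z} \<noteq> b2"
  shows "builds F n S (Suc (Suc 0)) (insert {y, z} (insert {x, y} C0)) (insert b2 (insert b1 B0))"
proof -
  let ?C = "insert {x, z} (insert {y, z} (insert {x, y} C0))"
  define L where "L = {{z, w1}, {z, w2}, {x, w1}, {x, w2}}"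
  have "card L = 4"
    using D distinct_card[of "[{z, w1}, {z, w2}, {x, w1}, {x, w2}]"]
    by (auto simp: L_def doubleton_eq_iff)
  then have leg_free: "\<exists>e\<in>L. e \<notin> {b1, b2, b3}" for b3
    using card_less_ex_notin[of "{b1, b2, b3}" L] card_insert_le_m1[of 3] by (simp add: card_insert_if)
  obtain e0 where e0: "e0 \<in> L" "e0 \<notin> {b1, b2}"
    using leg_free[of b2] by auto
  show ?thesis
  proof (rule builds_Suc_claimI[of "{x, z}" _ _ _ _ e0])
    show "{x, z} \<in> Kn_edges n" using edge_in_Kn S D by auto
    show "{x, z} \<notin> insert {y, z} (insert {x, y} C0)"
      using edge_notin_C0 S D by (auto simp: doubleton_eq_iff)
    show "{x, z} \<notin> insert b2 (insert b1 B0)" using edge_notin_B0 S xz_free by auto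
    show "F_free F ?C"
      by (rule F_free_below_paw[of x y z w1]) (use S D in \<open>auto simp: paw_edges_def\<close>)
    show "e0 \<in> Kn_edges n - (?C \<union> insert b2 (insert b1 B0))"
      using e0 edge_in_Kn edge_notin_C0 edge_notin_B0 S D by (auto simp: L_def doubleton_eq_iff)
  next
    fix b3
    obtain c w where leg: "{c, w} \<in> L" "{c, w} \<notin> {b1, b2, b3}" "c \<in> {x, z}" "w \<in> {w1, w2}"
      using leg_free[of b3] unfolding L_def by blast
    show "builds F n S (Suc 0) ?C (insert b3 (insert b2 (insert b1 B0)))"
    proof (cases "c = z")
      case True
      show ?thesis
        by (rule builds_Suc_complete_pawI[of x y z w c w])
          (use S D leg True edge_notin_C0 edge_notin_B0 in \<open>auto simp: paw_edges_def doubleton_eq_iff\<close>)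
    next
      case False
      show ?thesis
        by (rule builds_Suc_complete_pawI[of y z x w c w])
          (use S D leg False edge_notin_C0 edge_notin_B0 in \<open>auto simp: paw_edges_def doubleton_eq_iff\<close>)
    qed
  qed
qed

lemma builds_via_star:
  assumes S: "x \<in> S" "y \<in> S" "z \<in> S" "w \<in> S" and D: "distinct [x, y, z, w]"
    and spokes_free: "{x, w} \<notin> {b1, b2}" "{y, w} \<notin> {b1, b2}" "{z, w} \<notin> {b1, b2}"
  shows "builds F n S (Suc (Suc 0)) (insert {y, z} (insert {x, y} C0)) (insert b2 (insert b1 B0))"
proof -
  let ?C = "insert {y, w} (insert {y, z} (insert {x, y} C0))"
  show ?thesis
  proof (rule builds_Suc_claimI[of "{y, w}" _ _ _ _ "{x, w}"])
    show "{y, w} \<in> Kn_edges n" using edge_in_Kn S D by auto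
    show "{y, w} \<notin> insert {y, z} (insert {x, y} C0)"
      using edge_notin_C0 S D by (auto simp: doubleton_eq_iff)
    show "{y, w} \<notin> insert b2 (insert b1 B0)" using edge_notin_B0 S spokes_free by auto
    show "F_free F ?C"
      by (rule F_free_below_paw[of x w y z]) (use S D in \<open>auto simp: paw_edges_def\<close>)
    show "{x, w} \<in> Kn_edges n - (?C \<union> insert b2 (insert b1 B0))"
      using edge_in_Kn edge_notin_C0 edge_notin_B0 S D spokes_free by (auto simp: doubleton_eq_iff)
  next
    fix b3
    show "builds F n S (Suc 0) ?C (insert b3 (insert b2 (insert b1 B0)))"
    proof (cases "b3 = {x, w}")
      case False
      show ?thesis
        by (rule builds_Suc_complete_pawI[of x w y z x w])
          (use S D spokes_free False edge_notin_C0 edge_notin_B0 in \<open>auto simp: paw_edges_def doubleton_eq_iff\<close>)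
    next
      case True
      show ?thesis
        by (rule builds_Suc_complete_pawI[of z w y x z w])
          (use S D spokes_free True edge_notin_C0 edge_notin_B0 in \<open>auto simp: paw_edges_def doubleton_eq_iff\<close>)
    qed
  qed
qed

lemma builds_from_edge:
  assumes S: "x \<in> S" "y \<in> S" "z \<in> S" "w1 \<in> S" "w2 \<in> S"
    and D: "distinct [x, y, z, w1, w2]"
    and b1: "{x, z} \<noteq> b1" "{y, z} \<noteq> b1"
  shows "builds F n S (Suc (Suc (Suc 0))) (insert {x, y} C0) (insert b1 B0)"
proof (rule builds_Suc_claimI[of "{y, z}" _ _ _ _ "{x, z}"])
  show "{y, z} \<in> Kn_edges n" using edge_in_Kn S D by auto
  show "{y, z} \<notin> insert {x, y} C0" using edge_notin_C0 S D by (auto simp: doubleton_eq_iff)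
  show "{y, z} \<notin> insert b1 B0" using edge_notin_B0 S b1 by auto
  show "F_free F (insert {y, z} (insert {x, y} C0))"
    by (rule F_free_below_paw[of x y z w1]) (use S D in \<open>auto simp: paw_edges_def\<close>)
  show "{x, z} \<in> Kn_edges n - (insert {y, z} (insert {x, y} C0) \<union> insert b1 B0)"
    using edge_in_Kn edge_notin_C0 edge_notin_B0 S D b1 by (auto simp: doubleton_eq_iff)
next
  fix b2
  show "builds F n S (Suc (Suc 0)) (insert {y, z} (insert {x, y} C0)) (insert b2 (insert b1 B0))"
  proof (cases "b2 = {x, z}")
    case False
    then show ?thesis using builds_closing_triangle[OF S D] b1 by auto
  next
    case True
    show ?thesis
    proof (cases "b1 \<in> {{x, w1}, {y, w1}, {z, w1}}")
      case False
      then show ?thesis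
        using builds_via_star[of x y z w1 b1 b2] S D True by (auto simp: doubleton_eq_iff)
    next
      case True
      then show ?thesis
        using builds_via_star[of x y z w2 b1 b2] S D \<open>b2 = {x, z}\<close> by (auto simp: doubleton_eq_iff)
    qed
  qed
qed

lemma builds_from_fresh:
  assumes S: "x \<in> S" "y \<in> S" "z1 \<in> S" "z2 \<in> S" "z3 \<in> S"
    and D: "distinct [x, y, z1, z2, z3]"
  shows "builds F n S (Suc (Suc (Suc (Suc 0)))) C0 B0"
proof (rule builds_Suc_claimI[of "{x, y}" _ _ _ _ "{x, z1}"])
  show "{x, y} \<in> Kn_edges n" using edge_in_Kn S D by auto
  show "{x, y} \<notin> C0" using edge_notin_C0 S by auto
  show "{x, y} \<notin> B0" using edge_notin_B0 S by auto
  show "F_free F (insert {x, y} C0)"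
    by (rule F_free_below_paw[of x y z1 z2]) (use S D in \<open>auto simp: paw_edges_def\<close>)
  show "{x, z1} \<in> Kn_edges n - (insert {x, y} C0 \<union> B0)"
    using edge_in_Kn edge_notin_C0 edge_notin_B0 S D by (auto simp: doubleton_eq_iff)
next
  fix b1
  show "builds F n S (Suc (Suc (Suc 0))) (insert {x, y} C0) (insert b1 B0)"
  proof (cases "b1 \<in> {{x, z1}, {y, z1}}")
    case False
    then show ?thesis using builds_from_edge[of x y z1 z2 z3 b1] S D by auto
  next
    case True
    then show ?thesis using builds_from_edge[of x y z2 z1 z3 b1] S D by (auto simp: doubleton_eq_iff)
  qed
qed

end

theorem lemma2p3:
  fixes F :: "'b set set" and n :: nat and C B :: "nat set set" and v :: "nat \<Rightarrow> nat"
  assumes "C \<subseteq> Kn_edges n" and "B \<subseteq> Kn_edges n" and "C \<inter> B = {}"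
    and "F_free F C"
    and "\<forall>i\<in>{1..5}. v i < n"
    and "inj_on v {1..5}"
    and "\<forall>i\<in>{1..5}. \<forall>e\<in>C. v i \<notin> e"
    and "\<forall>i\<in>{1..5}. \<forall>j\<in>{1..5}. {v i, v j} \<notin> B"
    and "\<exists>a\<in>v ` {1..5}. \<exists>b\<in>v ` {1..5}. \<exists>c\<in>v ` {1..5}. \<exists>d\<in>v ` {1..5}.
           distinct [a,b,c,d] \<and> F_free F (C \<union> paw_edges a b c d)"
  shows "builds F n (v ` {1..5}) 4 C B"
proof -
  let ?S = "v ` {1..5}"
  have C_avoids_S: "\<And>e. e \<in> C \<Longrightarrow> e \<inter> ?S = {}" using assms(7) by blast
  obtain a b c d where abcd: "{a, b, c, d} \<subseteq> ?S" "distinct [a, b, c, d]"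
    "F_free F (C \<union> paw_edges a b c d)"
    using assms(9) by blast
  interpret fresh_vertex_set F n ?S C B
  proof
    show "{x, y} \<in> Kn_edges n" if "x \<in> ?S" "y \<in> ?S" "x \<noteq> y" for x y
      using that assms(5) unfolding Kn_edges_def by auto
    show "F_free F (C \<union> paw_edges x y z w)"
      if "x \<in> ?S" "y \<in> ?S" "z \<in> ?S" "w \<in> ?S" "distinct [x, y, z, w]" for x y z w
      using F_free_paw_relabel[OF C_avoids_S that(5) _ abcd(2,1,3)] that(1-4) by blast
  qed (use assms(7,8) in blast)+
  have "{1..5::nat} = {1, 2, 3, 4, 5}" by auto
  then have "distinct [v 1, v 2, v 3, v 4, v 5]"
    using assms(6) by (auto simp: inj_on_def)
  then have "builds F n ?S (Suc (Suc (Suc (Suc 0)))) C B"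
    by (intro builds_from_fresh) auto
  then show ?thesis by (simp add: numeral_eq_Suc)
qed

end
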